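(* For every first-order formula $\varphi(x,y)$ over the signature $\sigma=\{E,<,A_1,\dots,A_m\}$, where $E$ and $<$ are binary and $A_1,\dots,A_m$ are unary, there is a directed graph $G$ consisting of a single directed path and a linear order $<$ on its vertices such that for all sets $A_1,\dots,A_m$ of nodes of $G$ there are nodes $u,v_1,v_2$ with $(G,<,A_1,\dots,A_m)\models\varphi(u,v_1)\leftrightarrow\varphi(u,v_2)$, while $v_2$ is reachable from $u$ in $G$ and $v_1$ is not.
   Context: Reachability means existence of a directed path along edges of $E$. *)

theory Defs
  imports Main
begin

datatype fo =
    FEq nat nat
  | FEdge nat nat
  | FLess nat nat
  | FPred nat nat   (* FPred i x : x is in A_i *)
  | FFalse
  | FNeg fo
  | FConj fo fo
  | FDisj fo fo
  | FEx nat fo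
  | FAll nat fo

fun fv :: "fo \<Rightarrow> nat set" where
  "fv (FEq x y) = {x, y}"
| "fv (FEdge x y) = {x, y}"
| "fv (FLess x y) = {x, y}"
| "fv (FPred i x) = {x}"
| "fv FFalse = {}"
| "fv (FNeg p) = fv p"
| "fv (FConj p q) = fv p \<union> fv q"
| "fv (FDisj p q) = fv p \<union> fv q"
| "fv (FEx x p) = fv p - {x}"
| "fv (FAll x p) = fv p - {x}"

fun preds :: "fo \<Rightarrow> nat set" where
  "preds (FPred i x) = {i}"
| "preds (FNeg p) = preds p"
| "preds (FConj p q) = preds p \<union> preds q"
| "preds (FDisj p q) = preds p \<union> preds q"
| "preds (FEx x p) = preds p"
| "preds (FAll x p) = preds p"
| "preds _ = {}"

fun sat :: "'a set \<Rightarrow> ('a \<times> 'a) set \<Rightarrow> ('a \<times> 'a) set \<Rightarrow> (nat \<Rightarrow> 'a set)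
             \<Rightarrow> (nat \<Rightarrow> 'a) \<Rightarrow> fo \<Rightarrow> bool" where
  "sat V E L A s (FEq x y) = (s x = s y)"
| "sat V E L A s (FEdge x y) = ((s x, s y) \<in> E)"
| "sat V E L A s (FLess x y) = ((s x, s y) \<in> L)"
| "sat V E L A s (FPred i x) = (s x \<in> A i)"
| "sat V E L A s FFalse = False"
| "sat V E L A s (FNeg p) = (\<not> sat V E L A s p)"
| "sat V E L A s (FConj p q) = (sat V E L A s p \<and> sat V E L A s q)"
| "sat V E L A s (FDisj p q) = (sat V E L A s p \<or> sat V E L A s q)"
| "sat V E L A s (FEx x p) = (\<exists>a\<in>V. sat V E L A (s(x := a)) p)"
| "sat V E L A s (FAll x p) = (\<forall>a\<in>V. sat V E L A (s(x := a)) p)"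

definition is_dipath_graph :: "'a set \<Rightarrow> ('a \<times> 'a) set \<Rightarrow> bool" where
  "is_dipath_graph V E \<longleftrightarrow>
     (\<exists>p. p \<noteq> [] \<and> distinct p \<and> set p = V \<and>
          E = {(p ! i, p ! Suc i) | i. Suc i < length p})"

definition is_strict_linorder_on :: "'a set \<Rightarrow> ('a \<times> 'a) set \<Rightarrow> bool" where
  "is_strict_linorder_on V L \<longleftrightarrow> L \<subseteq> V \<times> V \<and> strict_linear_order_on V L"

text \<open>phi(u,v): variable 0 is x, variable 1 is y.\<close>
definition sat2 :: "'a set \<Rightarrow> ('a \<times> 'a) set \<Rightarrow> ('a \<times> 'a) set \<Rightarrow> (nat \<Rightarrow> 'a set)
             \<Rightarrow> fo \<Rightarrow> 'a \<Rightarrow> 'a \<Rightarrow> bool" where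
  "sat2 V E L A phi u v = sat V E L A (\<lambda>i. if i = 0 then u else v) phi"

end

theory Submission
  imports Defs "HOL-Library.FSet"
begin

text \<open>Let q be the quantifier rank of \<open>\<phi>\<close> and D > 2^q. The graph is a t \<times> k grid with
  t = 2D + 1 rows, ordered row by row by \<open><\<close> and traversed column by column by the path.
  Once the sets \<open>A\<^sub>i\<close> are fixed, every column is a word over a finite alphabet, and
  the number of rank-q types of single columns in the linearly ordered word of columns is
  bounded independently of k and of the \<open>A\<^sub>i\<close>. For k large, two columns i' + 2 \<le> i
  therefore have the same rank-q type. An Ehrenfeucht-Fraisse argument shows that \<open>\<phi>\<close>
  cannot tell the middle vertex u of column i from the middle vertex u' of column i' when the
  second argument is a vertex v of the last row, or u resp. u' itself: pebbles near the middle
  row are answered in the same row following the game on columns, pebbles far from it are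
  copied, and the gap between the two zones is halved in every round. Now the vertex v in the
  last row of column i' + 1 is reachable from u' but not from u, and the first vertex is not
  reachable from u'. Two of the values \<open>\<phi>(u',0)\<close>, \<open>\<phi>(u',u')\<close>, \<open>\<phi>(u',v)\<close>
  agree, which gives the triple either at u' or, via \<open>\<phi>(u,u) = \<phi>(u,v)\<close>, at u.\<close>

definition path_edges :: "'a list \<Rightarrow> ('a \<times> 'a) set" where
  "path_edges p = {(p ! i, p ! Suc i) | i. Suc i < length p}"

lemma path_edges_nth_iff:
  assumes "distinct p" "a < length p" "b < length p"
  shows "(p ! a, p ! b) \<in> path_edges p \<longleftrightarrow> b = Suc a"
  using assms by (auto simp: path_edges_def nth_eq_iff_index_eq)

lemma rtrancl_path_edges_nth_iff:
  assumes "distinct p" "a < length p" "b < length p"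
  shows "(p ! a, p ! b) \<in> (path_edges p)\<^sup>* \<longleftrightarrow> a \<le> b"
proof
  have reach: "\<exists>c<length p. z = p ! c \<and> a \<le> c" if "(p ! a, z) \<in> (path_edges p)\<^sup>*" for z
    using that
  proof (induction rule: rtrancl_induct)
    case (step y z)
    then obtain c where c: "c < length p" "y = p ! c" "a \<le> c" by blast
    from step.hyps(2) obtain i where i: "y = p ! i" "z = p ! Suc i" "Suc i < length p"
      by (auto simp: path_edges_def)
    with c assms(1) have "i = c" by (simp add: nth_eq_iff_index_eq)
    with c i show ?case by auto
  qed (use assms in blast)
  assume "(p ! a, p ! b) \<in> (path_edges p)\<^sup>*"
  then obtain c where "c < length p" "p ! b = p ! c" "a \<le> c" using reach by blast
  with assms show "a \<le> b" by (simp add: nth_eq_iff_index_eq)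
next
  assume "a \<le> b"
  then show "(p ! a, p ! b) \<in> (path_edges p)\<^sup>*"
    using assms(3)
  proof (induction b rule: dec_induct)
    case (step b)
    then have "(p ! b, p ! Suc b) \<in> path_edges p"
      by (auto simp: path_edges_def)
    with step show ?case by (meson Suc_lessD rtrancl_into_rtrancl)
  qed simp
qed

section \<open>The grid\<close>

text \<open>For x < t * k, \<open>transpose_index t k\<close> maps the position of x in a row-major
  enumeration of a t \<times> k grid to its position in the column-major enumeration.\<close>

definition transpose_index :: "nat \<Rightarrow> nat \<Rightarrow> nat \<Rightarrow> nat" where
  "transpose_index t k x = (x mod k) * t + x div k"

lemma transpose_index_less:
  assumes "x < t * k" shows "transpose_index t k x < t * k"
proof -
  have "0 < k" "x div k < t"
    using assms by (auto simp: less_mult_imp_div_less mult.commute intro: gr0I)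
  then have "(x mod k) * t + x div k < (x mod k + 1) * t" by simp
  also have "\<dots> \<le> k * t"
    using \<open>0 < k\<close> by (intro mult_right_mono) (auto simp: Suc_le_eq)
  finally show ?thesis by (simp add: transpose_index_def mult.commute)
qed

lemma transpose_index_inverse:
  assumes "x < t * k" shows "transpose_index k t (transpose_index t k x) = x"
proof -
  have "x div k < t" using assms by (simp add: less_mult_imp_div_less mult.commute)
  then show ?thesis by (simp add: transpose_index_def)
qed

lemma less_iff_div_mod:
  fixes x y k :: nat
  shows "x < y \<longleftrightarrow> x div k < y div k \<or> (x div k = y div k \<and> x mod k < y mod k)"
proof (cases "x div k = y div k")
  case True
  then have "x div k * k = y div k * k" by simp
  with div_mult_mod_eq[of x k] div_mult_mod_eq[of y k] True show ?thesis by linarith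
next
  case False
  then show ?thesis
    by (metis div_le_mono le_neq_implies_less less_or_eq_imp_le not_le)
qed

lemma mult_add_less_mult:
  fixes r c t k :: nat
  assumes "r < t" "c < k"
  shows "r * k + c < t * k"
proof -
  have "r * k + c < Suc r * k" using assms(2) by simp
  also have "\<dots> \<le> t * k" using assms(1) by (intro mult_le_mono1) simp
  finally show ?thesis .
qed

text \<open>The path runs down
  each column and then jumps from the bottom of one column to the top of the next; the
  linear order is the natural order of \<open>nat\<close>, i.e.\ row-major.\<close>

locale grid =
  fixes t k :: nat
begin

abbreviation row :: "nat \<Rightarrow> nat" where "row x \<equiv> x div k"
abbreviation col :: "nat \<Rightarrow> nat" where "col x \<equiv> x mod k"

definition path :: "nat list" where
  "path = map (transpose_index k t) [0..<t * k]"

definition edges :: "(nat \<times> nat) set" where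
  "edges = path_edges path"

definition less_rel :: "(nat \<times> nat) set" where
  "less_rel = {(x, y). x < y \<and> y < t * k}"

lemma length_path [simp]: "length path = t * k"
  by (simp add: path_def)

lemma path_transpose_index:
  assumes "x < t * k" shows "path ! transpose_index t k x = x"
  using assms transpose_index_less transpose_index_inverse by (simp add: path_def)

lemma distinct_path: "distinct path"
proof -
  have "inj_on (transpose_index k t) {0..<t * k}"
    by (rule inj_on_inverseI[of _ "transpose_index t k"])
      (simp add: transpose_index_inverse mult.commute)
  then show ?thesis by (simp add: path_def distinct_map)
qed

lemma set_path: "set path = {..<t * k}"
proof (intro equalityI subsetI)
  show "x \<in> {..<t * k}" if "x \<in> set path" for x
    using that transpose_index_less[of _ k t] by (auto simp: path_def mult.commute)
  show "x \<in> set path" if "x \<in> {..<t * k}" for x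
    using that path_transpose_index transpose_index_less
    by (metis lessThan_iff length_path nth_mem)
qed

lemma is_dipath_graph_grid:
  assumes "0 < t * k" shows "is_dipath_graph {..<t * k} edges"
  unfolding is_dipath_graph_def
proof (intro exI conjI)
  show "path \<noteq> []" using assms by (metis length_path less_numeral_extra(3) list.size(3))
qed (simp_all add: distinct_path set_path edges_def path_edges_def)

lemma is_strict_linorder_on_grid: "is_strict_linorder_on {..<t * k} less_rel"
  by (auto simp: is_strict_linorder_on_def strict_linear_order_on_def less_rel_def
      trans_def irrefl_def total_on_def)

lemma reachable_iff:
  assumes "x < t * k" "y < t * k"
  shows "(x, y) \<in> edges\<^sup>* \<longleftrightarrow> transpose_index t k x \<le> transpose_index t k y"
  using rtrancl_path_edges_nth_iff[OF distinct_path, of "transpose_index t k x" "transpose_index t k y"]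
  by (simp add: assms edges_def path_transpose_index transpose_index_less)

lemma edge_iff:
  assumes "x < t * k" "y < t * k"
  shows "(x, y) \<in> edges \<longleftrightarrow> transpose_index t k y = Suc (transpose_index t k x)"
  using path_edges_nth_iff[OF distinct_path, of "transpose_index t k x" "transpose_index t k y"]
  by (simp add: assms edges_def path_transpose_index transpose_index_less)

lemma edge_iff_interior:
  assumes "x < t * k" "y < t * k" "row x + 1 < t \<or> 0 < row y"
  shows "(x, y) \<in> edges \<longleftrightarrow> row y = row x + 1 \<and> col y = col x"
proof -
  have rows: "row x < t" "row y < t"
    using assms(1,2) by (simp_all add: less_mult_imp_div_less mult.commute)
  have "col y * t + row y = col x * t + Suc (row x) \<longleftrightarrow> row y = row x + 1 \<and> col y = col x"
  proof
    assume eq: "col y * t + row y = col x * t + Suc (row x)"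
    show "row y = row x + 1 \<and> col y = col x"
    proof (cases "row x + 1 < t")
      case True
      have "row y = (col y * t + row y) mod t" "col y = (col y * t + row y) div t"
        using rows by simp_all
      with eq True show ?thesis by simp
    next
      case False
      with rows have "Suc (row x) = t" by simp
      with eq have "(col y * t + row y) mod t = (Suc (col x) * t) mod t" by simp
      with rows have "row y = 0" by simp
      with assms(3) False show ?thesis by simp
    qed
  qed simp
  then show ?thesis
    using assms(1,2) by (simp add: edge_iff transpose_index_def)
qed

lemma less_rel_iff:
  assumes "0 < k" "y < t * k"
  shows "(x, y) \<in> less_rel \<longleftrightarrow> row x < row y \<or> (row x = row y \<and> col x < col y)"
  using assms by (simp add: less_rel_def less_iff_div_mod)

lemma eq_iff_row_col: "x = y \<longleftrightarrow> row x = row y \<and> col x = col y"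
  by (metis div_mult_mod_eq)

lemma atomic_transfer:
  assumes "0 < k" "x < t * k" "y < t * k" "x' < t * k" "y' < t * k"
    and "row x' = row x" "row y' = row y" "row x + 1 < t \<or> 0 < row y"
    and "row x = row y \<or> row y = row x + 1 \<Longrightarrow>
      (col x < col y \<longleftrightarrow> col x' < col y') \<and> (col y < col x \<longleftrightarrow> col y' < col x')"
  shows "(x = y \<longleftrightarrow> x' = y') \<and> ((x, y) \<in> edges \<longleftrightarrow> (x', y') \<in> edges) \<and>
    ((x, y) \<in> less_rel \<longleftrightarrow> (x', y') \<in> less_rel)"
proof -
  have "col x = col y \<longleftrightarrow> col x' = col y'" if "row x = row y \<or> row y = row x + 1"
    using assms(9)[OF that] by (metis linorder_neq_iff)
  with assms show ?thesis
    by (auto simp: edge_iff_interior less_rel_iff eq_iff_row_col[of x y] eq_iff_row_col[of x' y'])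
qed

end

section \<open>Types of tuples of columns\<close>

text \<open>\<open>rank_type W k j cs\<close> is the rank-j type of the tuple cs in the labelled linear
  order \<open>({..<k}, <, W)\<close>: equal types mean that the duplicator wins the j-round game
  started from cs and cs'.\<close>

datatype 'a type_tree = Node 'a "'a type_tree fset"

definition atomic_type :: "(nat \<Rightarrow> 'l) \<Rightarrow> nat list \<Rightarrow> 'l list \<times> bool list list" where
  "atomic_type W cs = (map W cs, map (\<lambda>a. map (\<lambda>b. a < b) cs) cs)"

fun rank_type :: "(nat \<Rightarrow> 'l) \<Rightarrow> nat \<Rightarrow> nat \<Rightarrow> nat list \<Rightarrow> ('l list \<times> bool list list) type_tree"
where
  "rank_type W k 0 cs = Node (atomic_type W cs) {||}"
| "rank_type W k (Suc j) cs =
     Node (atomic_type W cs) ((\<lambda>c. rank_type W k j (cs @ [c])) |`| fset_of_list [0..<k])"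

lemma rank_type_atomic: "rank_type W k j cs = rank_type W k j cs' \<Longrightarrow> atomic_type W cs = atomic_type W cs'"
  by (cases j) auto

lemma rank_type_Suc_eq_iff:
  "rank_type W k (Suc j) cs = rank_type W k (Suc j) cs' \<longleftrightarrow> atomic_type W cs = atomic_type W cs' \<and>
     (\<lambda>c. rank_type W k j (cs @ [c])) ` {..<k} = (\<lambda>c. rank_type W k j (cs' @ [c])) ` {..<k}"
  by (simp add: fset_of_list.rep_eq fimage.rep_eq fset_inject[symmetric] atLeast_upt)

lemma rank_type_forth:
  assumes "rank_type W k (Suc j) cs = rank_type W k (Suc j) cs'" "c < k"
  shows "\<exists>c'<k. rank_type W k j (cs @ [c]) = rank_type W k j (cs' @ [c'])"
proof -
  have "rank_type W k j (cs @ [c]) \<in> (\<lambda>c. rank_type W k j (cs' @ [c])) ` {..<k}"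
    using rank_type_Suc_eq_iff[THEN iffD1, OF assms(1)] assms(2) by blast
  then show ?thesis by auto
qed

lemma rank_type_SucD:
  "rank_type W k (Suc j) cs = rank_type W k (Suc j) cs' \<Longrightarrow> rank_type W k j cs = rank_type W k j cs'"
proof (induction j arbitrary: cs cs')
  case (Suc j)
  let ?f = "\<lambda>c. rank_type W k j (cs @ [c])" and ?g = "\<lambda>c. rank_type W k j (cs' @ [c])"
  have "\<forall>c<k. \<exists>c'<k. ?f c = ?g c'" "\<forall>c<k. \<exists>c'<k. ?g c = ?f c'"
    using rank_type_forth[OF Suc.prems] rank_type_forth[OF Suc.prems[symmetric]] Suc.IH by blast+
  then have "?f ` {..<k} = ?g ` {..<k}"
    by (force simp: image_iff)
  with rank_type_atomic[OF Suc.prems] show ?case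
    unfolding rank_type_Suc_eq_iff by blast
qed simp

lemma atomic_type_map_eq:
  assumes "atomic_type W (map f ps) = atomic_type W (map g ps)" "p \<in> set ps" "q \<in> set ps"
  shows "W (f p) = W (g p) \<and> (f p < f q \<longleftrightarrow> g p < g q)"
  using assms by (simp add: atomic_type_def)

definition rank_types :: "'l set \<Rightarrow> nat \<Rightarrow> nat \<Rightarrow> ('l list \<times> bool list list) type_tree set" where
  "rank_types \<Lambda> j l = {rank_type W k j cs | W k cs. range W \<subseteq> \<Lambda> \<and> length cs = l}"

lemma finite_atomic_types:
  assumes "finite \<Lambda>"
  shows "finite {atomic_type W cs | W cs. range W \<subseteq> \<Lambda> \<and> length cs = l}"
proof (rule finite_subset)
  show "{atomic_type W cs | W cs. range W \<subseteq> \<Lambda> \<and> length cs = l} \<subseteq>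
    {xs. set xs \<subseteq> \<Lambda> \<and> length xs = l} \<times>
    {M. set M \<subseteq> {r. set r \<subseteq> UNIV \<and> length r = l} \<and> length M = l}"
    by (auto simp: atomic_type_def image_subset_iff)
  show "finite \<dots>"
    using assms by (intro finite_cartesian_product finite_lists_length_eq) auto
qed

lemma finite_fsets_subset:
  assumes "finite S" shows "finite {X. fset X \<subseteq> S}"
proof (rule finite_imageD)
  have "fset ` {X. fset X \<subseteq> S} \<subseteq> Pow S" by blast
  with assms show "finite (fset ` {X. fset X \<subseteq> S})" by (meson finite_Pow_iff finite_subset)
qed (simp add: inj_on_def fset_inject)

lemma finite_rank_types: "finite \<Lambda> \<Longrightarrow> finite (rank_types \<Lambda> j l)"
proof (induction j arbitrary: l)
  case 0
  have "rank_types \<Lambda> 0 l \<subseteq> (\<lambda>a. Node a {||}) ` {atomic_type W cs | W cs. range W \<subseteq> \<Lambda> \<and> length cs = l}"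
    unfolding rank_types_def by auto
  then show ?case by (rule finite_subset[OF _ finite_imageI[OF finite_atomic_types[OF 0]]])
next
  case (Suc j)
  let ?atoms = "{atomic_type W cs | W cs. range W \<subseteq> \<Lambda> \<and> length cs = l}"
  let ?children = "{X. fset X \<subseteq> rank_types \<Lambda> j (Suc l)}"
  have "rank_types \<Lambda> (Suc j) l \<subseteq> case_prod Node ` (?atoms \<times> ?children)"
  proof
    fix T assume "T \<in> rank_types \<Lambda> (Suc j) l"
    then obtain W k cs where T: "T = rank_type W k (Suc j) cs" "range W \<subseteq> \<Lambda>" "length cs = l"
      unfolding rank_types_def by blast
    let ?X = "(\<lambda>c. rank_type W k j (cs @ [c])) |`| fset_of_list [0..<k]"
    have "rank_type W k j (cs @ [c]) \<in> rank_types \<Lambda> j (Suc l)" for c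
      unfolding rank_types_def using T(2,3) by force
    then have "fset ?X \<subseteq> rank_types \<Lambda> j (Suc l)"
      by (auto simp: fset_of_list.rep_eq)
    moreover have "atomic_type W cs \<in> ?atoms" using T(2,3) by blast
    ultimately have "(atomic_type W cs, ?X) \<in> ?atoms \<times> ?children" by blast
    then show "T \<in> case_prod Node ` (?atoms \<times> ?children)"
      by (rule rev_image_eqI) (simp add: T(1))
  qed
  moreover have "finite (?atoms \<times> ?children)"
    using Suc finite_atomic_types finite_fsets_subset by (intro finite_cartesian_product) blast+
  ultimately show ?case by (rule finite_subset[OF _ finite_imageI])
qed

lemma rank_type_pigeonhole:
  assumes "finite \<Lambda>" "range W \<subseteq> \<Lambda>" "2 * card (rank_types \<Lambda> j 1) + 2 \<le> k"
  shows "\<exists>i i'. i' + 2 \<le> i \<and> i < k \<and> rank_type W k j [i] = rank_type W k j [i']"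
proof -
  define N where "N = card (rank_types \<Lambda> j 1)"
  define f where "f n = rank_type W k j [2 * n]" for n
  have "f ` {..N} \<subseteq> rank_types \<Lambda> j 1"
    using assms(2) unfolding f_def rank_types_def by force
  then have "card (f ` {..N}) \<le> N"
    unfolding N_def by (rule card_mono[OF finite_rank_types[OF assms(1)]])
  then have "\<not> inj_on f {..N}"
    using card_image by fastforce
  then obtain a b where "a \<le> N" "b \<le> N" "a \<noteq> b" "f a = f b"
    unfolding inj_on_def by auto
  then obtain a b where "a < b" "b \<le> N" "f a = f b"
    by (metis linorder_neqE_nat)
  with assms(3) show ?thesis
    by (intro exI[of _ "2 * b"] exI[of _ "2 * a"]) (auto simp: f_def N_def)
qed

section \<open>Ehrenfeucht-Fraisse games\<close>

fun qrank :: "fo \<Rightarrow> nat" where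
  "qrank (FNeg p) = qrank p"
| "qrank (FConj p q) = max (qrank p) (qrank q)"
| "qrank (FDisj p q) = max (qrank p) (qrank q)"
| "qrank (FEx x p) = Suc (qrank p)"
| "qrank (FAll x p) = Suc (qrank p)"
| "qrank _ = 0"

lemma ef_game_sound:
  fixes I :: "nat \<Rightarrow> ('a \<times> 'a) list \<Rightarrow> bool"
  assumes atomic: "\<And>j ps x x' y y'. I j ps \<Longrightarrow> (x, x') \<in> set ps \<Longrightarrow> (y, y') \<in> set ps \<Longrightarrow>
      (x = y \<longleftrightarrow> x' = y') \<and> ((x, y) \<in> E \<longleftrightarrow> (x', y') \<in> E) \<and> ((x, y) \<in> L \<longleftrightarrow> (x', y') \<in> L) \<and>
      (\<forall>i\<in>P. x \<in> A i \<longleftrightarrow> x' \<in> A i)"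
    and forth: "\<And>j ps a. I (Suc j) ps \<Longrightarrow> a \<in> V \<Longrightarrow> \<exists>b\<in>V. I j (ps @ [(a, b)])"
    and backward: "\<And>j ps b. I (Suc j) ps \<Longrightarrow> b \<in> V \<Longrightarrow> \<exists>a\<in>V. I j (ps @ [(a, b)])"
    and "I j ps" "\<forall>v. (s v, s' v) \<in> set ps" "qrank \<phi> \<le> j" "preds \<phi> \<subseteq> P"
  shows "sat V E L A s \<phi> \<longleftrightarrow> sat V E L A s' \<phi>"
  using assms(4-)
proof (induction \<phi> arbitrary: j ps s s')
  case (FEq a b) then show ?case using atomic[of j ps "s a" "s' a" "s b" "s' b"] by simp
next
  case (FEdge a b) then show ?case using atomic[of j ps "s a" "s' a" "s b" "s' b"] by simp
next
  case (FLess a b) then show ?case using atomic[of j ps "s a" "s' a" "s b" "s' b"] by simp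
next
  case (FPred i a) then show ?case using atomic[of j ps "s a" "s' a" "s a" "s' a"] by simp
next
  case (FConj p q) then show ?case using FConj.IH[OF FConj.prems(1,2)] by auto
next
  case (FDisj p q) then show ?case using FDisj.IH[OF FDisj.prems(1,2)] by auto
next
  case (FEx x p)
  then obtain j' where j: "j = Suc j'" "qrank p \<le> j'" by (cases j) auto
  have IH: "sat V E L A (s(x := a)) p \<longleftrightarrow> sat V E L A (s'(x := b)) p" if "I j' (ps @ [(a, b)])" for a b
    using FEx that j by (intro FEx.IH[of j' "ps @ [(a, b)]"]) auto
  show ?case using forth[of j' ps] backward[of j' ps] FEx.prems(1) IH by (simp add: j(1)) blast
next
  case (FAll x p)
  then obtain j' where j: "j = Suc j'" "qrank p \<le> j'" by (cases j) auto
  have IH: "sat V E L A (s(x := a)) p \<longleftrightarrow> sat V E L A (s'(x := b)) p" if "I j' (ps @ [(a, b)])" for a b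
    using FAll that j by (intro FAll.IH[of j' "ps @ [(a, b)]"]) auto
  show ?case using forth[of j' ps] backward[of j' ps] FAll.prems(1) IH by (simp add: j(1)) blast
qed simp_all

section \<open>The duplicator strategy on the grid\<close>

lemma gap_split:
  fixes Z F P d :: nat
  assumes "Z + 2 * P < F"
  obtains Z' F' where "Z \<le> Z'" "Z' + P < F'" "F' \<le> F" "d \<le> Z' \<or> F' \<le> d"
proof (cases "d \<le> Z \<or> F \<le> d")
  case True
  with assms show ?thesis by (intro that[of Z F]) auto
next
  case False
  show ?thesis
  proof (cases "2 * d \<le> F + Z")
    case True
    with assms False show ?thesis by (intro that[of d F]) auto
  next
    case False
    with assms \<open>\<not> (d \<le> Z \<or> F \<le> d)\<close> show ?thesis by (intro that[of Z d]) auto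
  qed
qed

locale ef_grid = grid +
  fixes m :: nat and A :: "nat \<Rightarrow> nat set" and r0 D :: nat
  assumes k_pos: "0 < k" and D_le_r0: "D \<le> r0" and r0_D_less: "r0 + D < t"
begin

definition column_label :: "nat \<Rightarrow> bool list list" where
  "column_label c = map (\<lambda>r. map (\<lambda>i. r * k + c \<in> A i) [0..<m]) [0..<t]"

definition row_dist :: "nat \<Rightarrow> nat" where
  "row_dist x = (if r0 \<le> row x then row x - r0 else r0 - row x)"

abbreviation near :: "nat \<Rightarrow> (nat \<times> nat) list \<Rightarrow> (nat \<times> nat) list" where
  "near Z ps \<equiv> filter (\<lambda>(x, y). row_dist x \<le> Z) ps"

text \<open>The duplicator's invariant with j rounds to go: every pebble pair lies in one row;
  pairs within distance Z of row r0 are matched by the j-round game on their columns, pairs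
  at distance at least F are equal, and the gap between Z and F exceeds \<open>2 ^ j\<close>, so that
  no pebble can be near both zones.\<close>

definition dup_inv :: "nat \<Rightarrow> nat \<Rightarrow> nat \<Rightarrow> (nat \<times> nat) list \<Rightarrow> bool" where
  "dup_inv Z F j ps \<longleftrightarrow> Z + 2 ^ j < F \<and> F \<le> D \<and>
     (\<forall>(x, y) \<in> set ps. x < t * k \<and> y < t * k \<and> row y = row x \<and>
        (row_dist x \<le> Z \<or> F \<le> row_dist x \<and> y = x)) \<and>
     rank_type column_label k j (map (\<lambda>(x, y). col x) (near Z ps)) =
     rank_type column_label k j (map (\<lambda>(x, y). col y) (near Z ps))"

lemma row_less: "x < t * k \<Longrightarrow> row x < t"
  by (simp add: less_mult_imp_div_less mult.commute)

lemma mem_A_iff_column_label: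
  assumes "x < t * k" "i < m"
  shows "x \<in> A i \<longleftrightarrow> column_label (col x) ! row x ! i"
  using assms row_less by (simp add: column_label_def)

lemma near_row_bounds:
  assumes "row_dist x \<le> Z" "Z < D"
  shows "0 < row x" "row x + 1 < t"
  using assms D_le_r0 r0_D_less by (auto simp: row_dist_def split: if_splits)

lemma near_far_rows_apart:
  assumes "row_dist x \<le> Z" "F \<le> row_dist y" "Z + 1 < F"
  shows "row y \<noteq> row x" "row y \<noteq> row x + 1" "row x \<noteq> row y + 1"
  using assms by (auto simp: row_dist_def split: if_splits)

lemma dup_inv_pairD:
  assumes "dup_inv Z F j ps" "(x, y) \<in> set ps"
  shows "x < t * k" "y < t * k" "row y = row x" "row_dist x \<le> Z \<or> F \<le> row_dist x \<and> y = x"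
  using assms by (auto simp: dup_inv_def)

lemma dup_inv_swap:
  assumes "dup_inv Z F j ps"
  shows "dup_inv Z F j (map prod.swap ps)"
proof -
  have dist: "row_dist y = row_dist x" if "(x, y) \<in> set ps" for x y
    using dup_inv_pairD(3)[OF assms that] by (simp add: row_dist_def)
  then have "near Z (map prod.swap ps) = map prod.swap (near Z ps)"
    unfolding filter_map by (intro arg_cong[where f = "map prod.swap"] filter_cong) force+
  moreover have cols: "(\<lambda>(x, y). col x) \<circ> prod.swap = (\<lambda>(x, y). col y)"
    "(\<lambda>(x, y). col y) \<circ> prod.swap = (\<lambda>(x, y). col x)"
    by auto
  moreover have "\<forall>(x, y) \<in> set (map prod.swap ps). x < t * k \<and> y < t * k \<and> row y = row x \<and>
      (row_dist x \<le> Z \<or> F \<le> row_dist x \<and> y = x)"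
    using dup_inv_pairD[OF assms] dist by fastforce
  ultimately show ?thesis
    using assms by (simp add: dup_inv_def cols)
qed

lemma dup_inv_forth:
  assumes inv: "dup_inv Z F (Suc j) ps" and a: "a < t * k"
  shows "\<exists>Z' F'. \<exists>b<t * k. dup_inv Z' F' j (ps @ [(a, b)])"
proof -
  obtain Z' F' where gap: "Z \<le> Z'" "Z' + 2 ^ j < F'" "F' \<le> F" "row_dist a \<le> Z' \<or> F' \<le> row_dist a"
    using inv gap_split[of Z "2 ^ j" F] by (auto simp: dup_inv_def)
  from inv have pairs: "\<forall>(x, y) \<in> set ps. x < t * k \<and> y < t * k \<and> row y = row x \<and>
      (row_dist x \<le> Z' \<or> F' \<le> row_dist x \<and> y = x)"
    using gap by (fastforce simp: dup_inv_def)
  from inv have near_eq: "near Z' ps = near Z ps"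
    using gap by (intro filter_cong) (auto simp: dup_inv_def)
  let ?cs = "map (\<lambda>(x, y). col x) (near Z ps)" and ?cs' = "map (\<lambda>(x, y). col y) (near Z ps)"
  have types: "rank_type column_label k (Suc j) ?cs = rank_type column_label k (Suc j) ?cs'"
    using inv by (simp add: dup_inv_def)
  show ?thesis
  proof (cases "row_dist a \<le> Z'")
    case True
    obtain c' where c': "c' < k"
      "rank_type column_label k j (?cs @ [col a]) = rank_type column_label k j (?cs' @ [c'])"
      using rank_type_forth[OF types mod_less_divisor[OF k_pos]] by blast
    define b where "b = row a * k + c'"
    have b: "b < t * k" "row b = row a" "col b = c'"
      using mult_add_less_mult[OF row_less[OF a] c'(1)] c'(1) by (simp_all add: b_def)
    have "dup_inv Z' F' j (ps @ [(a, b)])"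
      using gap pairs near_eq c' a b True inv by (auto simp: dup_inv_def)
    with b show ?thesis by blast
  next
    case False
    have "dup_inv Z' F' j (ps @ [(a, a)])"
      using gap pairs near_eq rank_type_SucD[OF types] a False inv by (auto simp: dup_inv_def)
    with a show ?thesis by blast
  qed
qed

lemma dup_inv_backward:
  assumes "dup_inv Z F (Suc j) ps" "b < t * k"
  shows "\<exists>Z' F'. \<exists>a<t * k. dup_inv Z' F' j (ps @ [(a, b)])"
proof -
  obtain Z' F' a where "a < t * k" "dup_inv Z' F' j (map prod.swap ps @ [(b, a)])"
    using dup_inv_forth[OF dup_inv_swap[OF assms(1)] assms(2)] by blast
  then show ?thesis
    using dup_inv_swap[of Z' F' j "map prod.swap ps @ [(b, a)]"] by (auto simp: o_def)
qed

lemma dup_inv_atomic: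
  assumes inv: "dup_inv Z F j ps" and px: "(x, x') \<in> set ps" and py: "(y, y') \<in> set ps"
  shows "(x = y \<longleftrightarrow> x' = y') \<and> ((x, y) \<in> edges \<longleftrightarrow> (x', y') \<in> edges) \<and>
    ((x, y) \<in> less_rel \<longleftrightarrow> (x', y') \<in> less_rel) \<and> (\<forall>i<m. x \<in> A i \<longleftrightarrow> x' \<in> A i)"
proof -
  have gap: "Z < D" "Z + 1 < F"
  proof -
    from inv have "Z + 2 ^ j < F" "F \<le> D" by (simp_all add: dup_inv_def)
    moreover have "1 \<le> (2::nat) ^ j" by simp
    ultimately show "Z < D" "Z + 1 < F" by linarith+
  qed
  have near_match: "column_label (col u) = column_label (col u') \<and> (col u < col v \<longleftrightarrow> col u' < col v')"
    if "(u, u') \<in> set ps" "row_dist u \<le> Z" "(v, v') \<in> set ps" "row_dist v \<le> Z" for u u' v v'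
  proof -
    have "atomic_type column_label (map (\<lambda>(x, y). col x) (near Z ps)) =
          atomic_type column_label (map (\<lambda>(x, y). col y) (near Z ps))"
      using inv by (intro rank_type_atomic[of column_label k j]) (simp add: dup_inv_def)
    from atomic_type_map_eq[OF this, of "(u, u')" "(v, v')"] that show ?thesis by simp
  qed
  note pairs = dup_inv_pairD[OF inv px] dup_inv_pairD[OF inv py]
  have relations: "(x = y \<longleftrightarrow> x' = y') \<and> ((x, y) \<in> edges \<longleftrightarrow> (x', y') \<in> edges) \<and>
    ((x, y) \<in> less_rel \<longleftrightarrow> (x', y') \<in> less_rel)"
  proof (cases "row_dist x \<le> Z \<or> row_dist y \<le> Z")
    case True
    then have "row x + 1 < t \<or> 0 < row y"
      using near_row_bounds[OF _ gap(1), of x] near_row_bounds[OF _ gap(1), of y] by auto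
    moreover have "(col x < col y \<longleftrightarrow> col x' < col y') \<and> (col y < col x \<longleftrightarrow> col y' < col x')"
      if adjacent: "row x = row y \<or> row y = row x + 1"
    proof -
      have "\<not> F \<le> row_dist y" if "row_dist x \<le> Z"
        using near_far_rows_apart[of x Z F y] that gap(2) adjacent by auto
      moreover have "\<not> F \<le> row_dist x" if "row_dist y \<le> Z"
        using near_far_rows_apart[of y Z F x] that gap(2) adjacent by auto
      ultimately have "row_dist x \<le> Z" "row_dist y \<le> Z"
        using True pairs(4,8) by auto
      then show ?thesis using near_match px py by blast
    qed
    ultimately show ?thesis
      using atomic_transfer[OF k_pos] pairs by blast
  next
    case False
    with pairs show ?thesis by auto
  qed
  moreover have "\<forall>i<m. x \<in> A i \<longleftrightarrow> x' \<in> A i"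
    using pairs near_match[OF px _ px] by (auto simp: mem_A_iff_column_label)
  ultimately show ?thesis by blast
qed

lemma dup_inv_sound:
  assumes "dup_inv Z F j ps" "\<forall>v. (s v, s' v) \<in> set ps" "qrank \<phi> \<le> j" "preds \<phi> \<subseteq> {..<m}"
  shows "sat {..<t * k} edges less_rel A s \<phi> \<longleftrightarrow> sat {..<t * k} edges less_rel A s' \<phi>"
proof (rule ef_game_sound[where I = "\<lambda>j ps. \<exists>Z F. dup_inv Z F j ps" and P = "{..<m}"])
  show "(x = y \<longleftrightarrow> x' = y') \<and> ((x, y) \<in> edges \<longleftrightarrow> (x', y') \<in> edges) \<and>
      ((x, y) \<in> less_rel \<longleftrightarrow> (x', y') \<in> less_rel) \<and> (\<forall>i\<in>{..<m}. x \<in> A i \<longleftrightarrow> x' \<in> A i)"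
    if inv: "\<exists>Z F. dup_inv Z F j ps" and pairs: "(x, x') \<in> set ps" "(y, y') \<in> set ps"
    for j ps x x' y y'
  proof -
    obtain Z F where "dup_inv Z F j ps" using inv by blast
    from dup_inv_atomic[OF this pairs] show ?thesis by simp
  qed
  show "\<exists>b\<in>{..<t * k}. \<exists>Z F. dup_inv Z F j (ps @ [(a, b)])"
    if "\<exists>Z F. dup_inv Z F (Suc j) ps" "a \<in> {..<t * k}" for j ps a
    using that dup_inv_forth by blast
  show "\<exists>a\<in>{..<t * k}. \<exists>Z F. dup_inv Z F j (ps @ [(a, b)])"
    if "\<exists>Z F. dup_inv Z F (Suc j) ps" "b \<in> {..<t * k}" for j ps b
    using that dup_inv_backward by blast
qed (use assms in blast)+

lemma witness_from_equal_column_types: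
  assumes cols: "i' + 2 \<le> i" "i < k"
    and types: "rank_type column_label k j [i] = rank_type column_label k j [i']"
    and "2 ^ j < D" "qrank \<phi> \<le> j" "preds \<phi> \<subseteq> {..<m}"
  shows "\<exists>u\<in>{..<t * k}. \<exists>v1\<in>{..<t * k}. \<exists>v2\<in>{..<t * k}.
    (sat2 {..<t * k} edges less_rel A \<phi> u v1 \<longleftrightarrow> sat2 {..<t * k} edges less_rel A \<phi> u v2) \<and>
    (u, v2) \<in> edges\<^sup>* \<and> (u, v1) \<notin> edges\<^sup>*"
proof -
  define u u' v where "u = r0 * k + i" and "u' = r0 * k + i'" and "v = (t - 1) * k + (i' + 1)"
  have r0: "0 < r0" "r0 < t" "D \<le> t - 1 - r0"
    using assms(4) D_le_r0 r0_D_less by auto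
  have in_grid: "u < t * k" "u' < t * k" "v < t * k" "0 < t * k"
    using mult_add_less_mult[of r0 t i k] mult_add_less_mult[of r0 t i' k]
      mult_add_less_mult[of "t - 1" t "i' + 1" k] cols r0 by (simp_all add: u_def u'_def v_def)
  have "i' + 1 < k" using cols by simp
  then have coords: "row u = r0" "col u = i" "row u' = r0" "col u' = i'"
      "row v = t - 1" "col v = i' + 1"
    using cols(2) by (simp_all add: u_def u'_def v_def del: Suc_eq_plus1 add_Suc_right)
  have "\<not> transpose_index t k u \<le> transpose_index t k v"
  proof -
    have "(i' + 1) * t + (t - 1) < (i' + 2) * t" using r0 by simp
    also have "\<dots> \<le> i * t" using cols(1) by (rule mult_le_mono1)
    finally show ?thesis by (simp add: transpose_index_def coords)
  qed
  moreover have "transpose_index t k u' \<le> transpose_index t k v"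
    using r0 by (simp add: transpose_index_def coords)
  moreover have "\<not> transpose_index t k u' \<le> transpose_index t k 0"
    using r0 by (simp add: transpose_index_def coords)
  ultimately have reach: "(u, v) \<notin> edges\<^sup>*" "(u', v) \<in> edges\<^sup>*" "(u', 0) \<notin> edges\<^sup>*"
    using in_grid by (simp_all add: reachable_iff)
  have dists: "row_dist u = 0" "row_dist u' = 0" "D \<le> row_dist v"
    using coords r0 by (auto simp: row_dist_def)
  have "dup_inv 0 D j [(u, u'), (v, v)]" "dup_inv 0 D j [(u, u')]"
    using assms(4) in_grid coords dists types by (auto simp: dup_inv_def)
  from dup_inv_sound[OF this(1) _ assms(5,6)] dup_inv_sound[OF this(2) _ assms(5,6)]
  have "sat2 {..<t * k} edges less_rel A \<phi> u v \<longleftrightarrow> sat2 {..<t * k} edges less_rel A \<phi> u' v"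
    "sat2 {..<t * k} edges less_rel A \<phi> u u \<longleftrightarrow> sat2 {..<t * k} edges less_rel A \<phi> u' u'"
    unfolding sat2_def by auto
  \<comment> \<open>two of the values of \<open>\<phi>\<close> at (u', 0), (u', u'), (u', v) agree\<close>
  then show ?thesis
    using in_grid reach by (cases "sat2 {..<t * k} edges less_rel A \<phi> u' 0") blast+
qed

end

theorem mainTheorem11:
  fixes phi :: fo and m :: nat
  assumes "fv phi \<subseteq> {0, 1}"
      and "preds phi \<subseteq> {..<m}"
  shows "\<exists>(V :: nat set) E L. is_dipath_graph V E \<and> is_strict_linorder_on V L \<and>
           (\<forall>A. (\<forall>i<m. A i \<subseteq> V) \<longrightarrow>
              (\<exists>u\<in>V. \<exists>v1\<in>V. \<exists>v2\<in>V.
                 (sat2 V E L A phi u v1 \<longleftrightarrow> sat2 V E L A phi u v2) \<and>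
                 (u, v2) \<in> E\<^sup>* \<and> (u, v1) \<notin> E\<^sup>*))"
proof -
  define D :: nat where "D = 2 ^ qrank phi + 1"
  define t :: nat where "t = 2 * D + 1"
  define \<Lambda> :: "bool list list set" where
    "\<Lambda> = {xs. set xs \<subseteq> {ys. length ys = m} \<and> length xs = t}"
  define k where "k = 2 * card (rank_types \<Lambda> (qrank phi) 1) + 2"
  have "finite \<Lambda>"
    unfolding \<Lambda>_def
    by (intro finite_lists_length_eq) (use finite_lists_length_eq[of "UNIV :: bool set" m] in simp)
  have "0 < t * k" by (simp add: t_def k_def)
  show ?thesis
  proof (intro exI conjI allI impI)
    show "is_dipath_graph {..<t * k} (grid.edges t k)"
      using \<open>0 < t * k\<close> by (rule grid.is_dipath_graph_grid)
    show "is_strict_linorder_on {..<t * k} (grid.less_rel t k)"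
      by (rule grid.is_strict_linorder_on_grid)
    fix A :: "nat \<Rightarrow> nat set"
    interpret ef_grid t k m A D D
      by unfold_locales (simp_all add: k_def t_def)
    have "range column_label \<subseteq> \<Lambda>"
      by (auto simp: column_label_def \<Lambda>_def)
    then have "\<exists>i i'. i' + 2 \<le> i \<and> i < k \<and>
      rank_type column_label k (qrank phi) [i] = rank_type column_label k (qrank phi) [i']"
      by (rule rank_type_pigeonhole[OF \<open>finite \<Lambda>\<close>]) (simp add: k_def)
    then show "\<exists>u\<in>{..<t * k}. \<exists>v1\<in>{..<t * k}. \<exists>v2\<in>{..<t * k}.
      (sat2 {..<t * k} edges less_rel A phi u v1 \<longleftrightarrow> sat2 {..<t * k} edges less_rel A phi u v2) \<and>
      (u, v2) \<in> edges\<^sup>* \<and> (u, v1) \<notin> edges\<^sup>*"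
      using witness_from_equal_column_types assms(2) by (auto simp: D_def)
  qed
qed

end
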